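(* The infinite word $u_\beta$ has affine factor complexity if and only if $u_\beta$ has no maximal left special factor.
   Context: $\beta>1$ is a simple Parry number with $d_\beta(1)=t_1\cdots t_m$, $m\ge2$, nonnegative integer digits, $t_1\ge1$, $t_m\ge1$, satisfying the Parry condition ($t_i\cdots t_m0^\omega$ lexicographically strictly smaller than $t_1\cdots t_m0^\omega$ for $2\le i\le m$). $\varphi$ is the substitution on $\mathcal A=\{0,\dots,m-1\}$ with $\varphi(k)=0^{t_{k+1}}(k+1)$ for $0\le k\le m-2$, $\varphi(m-1)=0^{t_m}$, and $u_\beta=\lim_n\varphi^n(0)$ is its fixed point. Affine factor complexity: the number $\mathcal C(n)$ of factors of length $n$ equals $an+b$ for all $n$. A factor $w$ is left special if at least two distinct letters $a$ make $aw$ a factor. A left special factor $w$ is maximal if for no letter $a\in\mathcal A$ is $wa$ a left special factor. *)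

theory Defs
  imports Main
begin

text \<open>Digits t = [t_1,...,t_m] of d_beta(1) (0-indexed list), padded with zeros.\<close>
definition tpad :: "nat list \<Rightarrow> nat \<Rightarrow> nat" where
  "tpad t j = (if j < length t then t ! j else 0)"

definition lex_less :: "(nat \<Rightarrow> nat) \<Rightarrow> (nat \<Rightarrow> nat) \<Rightarrow> bool" where
  "lex_less a b \<longleftrightarrow> (\<exists>k. (\<forall>j<k. a j = b j) \<and> a k < b k)"

definition simple_parry_digits :: "nat list \<Rightarrow> bool" where
  "simple_parry_digits t \<longleftrightarrow> length t \<ge> 2 \<and> t ! 0 \<ge> 1 \<and> last t \<ge> 1 \<and>
     (\<forall>i. 1 \<le> i \<and> i < length t \<longrightarrow> lex_less (\<lambda>j. tpad t (i + j)) (tpad t))"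

definition phi :: "nat list \<Rightarrow> nat \<Rightarrow> nat list" where
  "phi t k = (if k + 1 < length t then replicate (t ! k) 0 @ [k + 1]
              else replicate (t ! (length t - 1)) 0)"

definition phi_word :: "nat list \<Rightarrow> nat list \<Rightarrow> nat list" where
  "phi_word t w = concat (map (phi t) w)"

definition phi_iter :: "nat list \<Rightarrow> nat \<Rightarrow> nat list" where
  "phi_iter t n = (phi_word t ^^ n) [0]"

text \<open>The fixed point u_beta = lim phi^n(0): its i-th letter is the i-th letter of any
  phi^n(0) long enough (the first such n is used).\<close>
definition u_beta :: "nat list \<Rightarrow> nat \<Rightarrow> nat" where
  "u_beta t i = phi_iter t (LEAST n. i < length (phi_iter t n)) ! i"

definition factors :: "(nat \<Rightarrow> nat) \<Rightarrow> nat list set" where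
  "factors u = {w. \<exists>i. w = map u [i..<i + length w]}"

definition complexity :: "(nat \<Rightarrow> nat) \<Rightarrow> nat \<Rightarrow> nat" where
  "complexity u n = card {w \<in> factors u. length w = n}"

definition affine_complexity :: "(nat \<Rightarrow> nat) \<Rightarrow> bool" where
  "affine_complexity u \<longleftrightarrow> (\<exists>a b :: int. \<forall>n. int (complexity u n) = a * int n + b)"

definition left_special :: "(nat \<Rightarrow> nat) \<Rightarrow> nat list \<Rightarrow> bool" where
  "left_special u w \<longleftrightarrow> (\<exists>a b. a \<noteq> b \<and> a # w \<in> factors u \<and> b # w \<in> factors u)"

definition maximal_left_special :: "nat \<Rightarrow> (nat \<Rightarrow> nat) \<Rightarrow> nat list \<Rightarrow> bool" where
  "maximal_left_special m u w \<longleftrightarrow> left_special u w \<and> (\<forall>a<m. \<not> left_special u (w @ [a]))"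

end

theory Submission
  imports Defs
begin

text \<open>Since \<open>u = \<phi>(u)\<close>, the word \<open>u\<close> is a concatenation of blocks \<open>\<phi>(k)\<close>, each
  consisting of zeros followed by \<open>k + 1\<close>, except the all-zero block \<open>\<phi>(m - 1)\<close>; so
  every nonzero letter ends a block. A factor containing a nonzero letter that occurs after
  two different letters is therefore aligned with the blocks at both occurrences. Consequently an infinite word all of whose prefixes have the same two
  left extensions is the \<open>\<phi>\<close>-image of another such word, and by induction on the length of
  prefixes it equals \<open>u\<close>. Moreover every letter precedes every prefix of \<open>u\<close>.

  Without maximal left special factors, Koenig's lemma puts every left special factor on such
  an infinite word, so the left special factors are exactly the prefixes of \<open>u\<close>, each with
  \<open>m\<close> left extensions, and \<open>C(n) = (m - 1) n + 1\<close>. Conversely, a maximal left special factor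
  is not a prefix of \<open>u\<close> and makes \<open>C(n + 1) - C(n)\<close> at its length exceed the value \<open>m - 1\<close>
  taken at \<open>n = 0\<close>.\<close>

lemma in_factors_iff: "w \<in> factors u \<longleftrightarrow> (\<exists>i. \<forall>k<length w. u (i + k) = w ! k)"
proof
  assume "w \<in> factors u"
  then obtain i where "w = map u [i..<i + length w]"
    unfolding factors_def by blast
  then have "\<forall>k<length w. u (i + k) = w ! k"
    by (metis add_diff_cancel_left' length_map length_upt nth_map_upt)
  then show "\<exists>i. \<forall>k<length w. u (i + k) = w ! k" ..
next
  assume "\<exists>i. \<forall>k<length w. u (i + k) = w ! k"
  then obtain i where "\<forall>k<length w. u (i + k) = w ! k" ..
  then have "w = map u [i..<i + length w]"
    by (intro nth_equalityI) auto
  then show "w \<in> factors u"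
    unfolding factors_def by blast
qed

lemma Cons_in_factors_iff:
  "a # w \<in> factors u \<longleftrightarrow> (\<exists>i. u i = a \<and> (\<forall>k<length w. u (Suc i + k) = w ! k))"
proof -
  have "(\<forall>k<length (a # w). u (i + k) = (a # w) ! k) \<longleftrightarrow>
        u i = a \<and> (\<forall>k<length w. u (Suc i + k) = w ! k)" for i
    by (auto simp: less_Suc_eq_0_disj)
  then show ?thesis
    unfolding in_factors_iff by presburger
qed

lemma append_in_factorsD: "xs @ ys \<in> factors u \<Longrightarrow> xs \<in> factors u"
  unfolding in_factors_iff by (metis length_append nth_append trans_less_add1)

lemma Cons_in_factorsD: "a # w \<in> factors u \<Longrightarrow> w \<in> factors u"
  using Cons_in_factors_iff[of a w u] in_factors_iff[of w u] by blast

lemma prefix_in_factors: "map u [0..<n] \<in> factors u"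
  unfolding in_factors_iff by (intro exI[of _ 0]) simp

lemma left_special_appendD: "left_special u (xs @ ys) \<Longrightarrow> left_special u xs"
  unfolding left_special_def using append_in_factorsD[of "_ # xs" ys u] by auto

definition left_ext :: "(nat \<Rightarrow> nat) \<Rightarrow> nat list \<Rightarrow> nat set" where
  "left_ext u w = {a. a # w \<in> factors u}"

definition infinite_left_ext :: "(nat \<Rightarrow> nat) \<Rightarrow> nat \<Rightarrow> (nat \<Rightarrow> nat) \<Rightarrow> bool" where
  "infinite_left_ext u a W \<longleftrightarrow> (\<forall>n. a # map W [0..<n] \<in> factors u)"

lemma infinite_left_ext_iff:
  "infinite_left_ext u a W \<longleftrightarrow> (\<forall>n. \<exists>i. u i = a \<and> (\<forall>k<n. u (Suc i + k) = W k))"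
  unfolding infinite_left_ext_def Cons_in_factors_iff by simp

lemma in_left_ext_prefix_iff:
  "a \<in> left_ext u (map u [0..<n]) \<longleftrightarrow> (\<exists>i. u i = a \<and> (\<forall>k<n. u (Suc i + k) = u k))"
  unfolding left_ext_def Cons_in_factors_iff by simp

lemma antimono_pigeonhole:
  fixes Q :: "nat \<Rightarrow> 'a \<Rightarrow> bool"
  assumes "finite P" and "\<And>n. \<exists>p\<in>P. Q n p" and antimono: "\<And>n n' p. Q n' p \<Longrightarrow> n \<le> n' \<Longrightarrow> Q n p"
  shows "\<exists>p\<in>P. \<forall>n. Q n p"
proof -
  obtain p where "p \<in> P" and "infinite {n. Q n p}"
    using pigeonhole_infinite_rel[of "UNIV :: nat set" P Q] assms(1,2) by auto
  have "\<exists>n'\<ge>n. Q n' p" for n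
  proof (rule ccontr)
    assume "\<not> (\<exists>n'\<ge>n. Q n' p)"
    then have "{n. Q n p} \<subseteq> {..<n}"
      by (auto simp: not_le)
    then show False
      using \<open>infinite {n. Q n p}\<close> finite_subset by blast
  qed
  then show ?thesis
    using \<open>p \<in> P\<close> antimono by blast
qed

locale finite_alphabet_word =
  fixes u :: "nat \<Rightarrow> nat" and m :: nat
  assumes letter_less: "u i < m"
begin

lemma factor_letters: "w \<in> factors u \<Longrightarrow> set w \<subseteq> {..<m}"
  unfolding in_factors_iff using letter_less by (auto simp: in_set_conv_nth) metis

lemma left_ext_subset: "left_ext u w \<subseteq> {..<m}"
  unfolding left_ext_def using factor_letters by fastforce

lemma finite_left_ext: "finite (left_ext u w)"
  using left_ext_subset finite_subset by blast

lemma left_special_iff_card: "left_special u w \<longleftrightarrow> 2 \<le> card (left_ext u w)"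
proof -
  have "left_special u w \<longleftrightarrow> \<not> card (left_ext u w) \<le> 1"
    using card_le_Suc0_iff_eq[OF finite_left_ext, of w]
    unfolding left_special_def by (auto simp: left_ext_def)
  then show ?thesis
    by linarith
qed

lemma finite_factors_length: "finite {w \<in> factors u. length w = n}"
proof (rule finite_subset)
  show "{w \<in> factors u. length w = n} \<subseteq> {w. set w \<subseteq> {..<m} \<and> length w = n}"
    using factor_letters by blast
qed (simp add: finite_lists_length_eq)

lemma complexity_Suc_eq_sum:
  "complexity u (Suc n) = (\<Sum>w \<in> {w \<in> factors u. length w = n}. card (left_ext u w))"
proof -
  let ?F = "\<lambda>n. {w \<in> factors u. length w = n}"
  have "?F (Suc n) = (\<lambda>(w, a). a # w) ` (SIGMA w:?F n. left_ext u w)"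
    by (auto simp: left_ext_def length_Suc_conv image_iff intro: Cons_in_factorsD)
  moreover have "inj_on (\<lambda>(w, a). a # w) (SIGMA w:?F n. left_ext u w)"
    by (auto simp: inj_on_def)
  ultimately have "complexity u (Suc n) = card (SIGMA w:?F n. left_ext u w)"
    unfolding complexity_def by (simp add: card_image)
  also have "\<dots> = (\<Sum>w \<in> ?F n. card (left_ext u w))"
    using finite_factors_length finite_left_ext by (intro card_SigmaI) auto
  finally show ?thesis .
qed

lemma left_special_extends_infinitely:
  assumes no_max: "\<not> (\<exists>v. maximal_left_special m u v)" and "left_special u w"
  obtains W where "\<And>n. left_special u (map W [0..<n])" "w = map W [0..<length w]"
proof -
  define grow where "grow v = v @ [SOME a. a < m \<and> left_special u (v @ [a])]" for v
  define f where "f n = (grow ^^ n) w" for n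
  have grow: "left_special u (grow v)" if "left_special u v" for v
  proof -
    have "\<exists>a<m. left_special u (v @ [a])"
      using no_max that unfolding maximal_left_special_def by blast
    then show ?thesis
      unfolding grow_def by (metis (mono_tags, lifting) someI_ex)
  qed
  have ls_f: "left_special u (f n)" for n
    by (induction n) (simp_all add: f_def grow \<open>left_special u w\<close>)
  have length_f: "length (f n) = length w + n" for n
    by (induction n) (simp_all add: f_def grow_def)
  have take_f: "take (length (f j)) (f n) = f j" if "j \<le> n" for j n
    using that
  proof (induction n rule: dec_induct)
    case (step n)
    then show ?case
      by (simp add: f_def grow_def length_f[unfolded f_def])
  qed simp
  define W where "W k = f (Suc k) ! k" for k
  have W_f: "map W [0..<n] = take n (f n)" for n
  proof (rule nth_equalityI)
    fix k assume "k < length (map W [0..<n])"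
    then have "k < n" by simp
    have "W k = take (length (f (Suc k))) (f n) ! k"
      using take_f[of "Suc k" n] \<open>k < n\<close> by (simp add: W_def)
    also have "\<dots> = f n ! k"
      by (simp add: length_f)
    finally show "map W [0..<n] ! k = take n (f n) ! k"
      using \<open>k < n\<close> by simp
  qed (simp add: length_f)
  show ?thesis
  proof (rule that)
    show "left_special u (map W [0..<n])" for n
      using ls_f[of n] left_special_appendD[where xs = "take n (f n)" and ys = "drop n (f n)"] W_f by simp
    show "w = map W [0..<length w]"
      using W_f[of "length w"] take_f[of 0 "length w"] by (simp add: f_def)
  qed
qed

lemma left_special_prefixes_common_ext:
  assumes "\<And>n. left_special u (map W [0..<n])"
  obtains a b where "a \<noteq> b" "infinite_left_ext u a W" "infinite_left_ext u b W"
proof -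
  define Q where "Q n p \<longleftrightarrow> (\<forall>c\<in>{fst p, snd p}. c # map W [0..<n] \<in> factors u)" for n p
  define pairs where "pairs = {(a, b). a < m \<and> b < m \<and> a \<noteq> b}"
  have "\<exists>p\<in>pairs. Q n p" for n
  proof -
    obtain a b where "a \<noteq> b" "a # map W [0..<n] \<in> factors u" "b # map W [0..<n] \<in> factors u"
      using assms unfolding left_special_def by blast
    moreover from this have "a < m" "b < m"
      using factor_letters by fastforce+
    ultimately show ?thesis
      unfolding pairs_def Q_def by auto
  qed
  moreover have "Q n p" if "Q n' p" "n \<le> n'" for n n' p
  proof -
    have "c # map W [0..<n'] = (c # map W [0..<n]) @ map W [n..<n']" for c
      using upt_add_eq_append[of 0 n "n' - n"] \<open>n \<le> n'\<close> by simp
    then show ?thesis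
      using that(1) unfolding Q_def by (metis append_in_factorsD)
  qed
  moreover have "finite pairs"
    by (rule finite_subset[of _ "{..<m} \<times> {..<m}"]) (auto simp: pairs_def)
  ultimately obtain a b where "a \<noteq> b" "\<forall>n. Q n (a, b)"
    using antimono_pigeonhole[of pairs Q] unfolding pairs_def by blast
  then show ?thesis
    using that unfolding infinite_left_ext_def Q_def by auto
qed

end

locale left_full_word = finite_alphabet_word +
  assumes two_le_m: "2 \<le> m"
    and left_ext_prefix: "left_ext u (map u [0..<n]) = {..<m}"
begin

lemma left_special_prefix: "left_special u (map u [0..<n])"
  using left_special_iff_card left_ext_prefix two_le_m by simp

lemma left_ext_nonempty:
  assumes "w \<in> factors u"
  shows "left_ext u w \<noteq> {}"
proof -
  obtain i where i: "\<forall>k<length w. u (i + k) = w ! k"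
    using assms in_factors_iff by blast
  show ?thesis
  proof (cases i)
    case 0
    then have "w = map u [0..<length w]"
      using i by (intro nth_equalityI) auto
    then have "0 \<in> left_ext u w"
      using left_ext_prefix[of "length w"] two_le_m by simp
    then show ?thesis
      by blast
  next
    case (Suc j)
    then have "u j \<in> left_ext u w"
      using i unfolding left_ext_def Cons_in_factors_iff by auto
    then show ?thesis
      by blast
  qed
qed

lemma factors_length_0: "{w \<in> factors u. length w = 0} = {map u [0..<0]}"
  using prefix_in_factors[of u 0] by auto

lemma complexity_Suc:
  "complexity u (Suc n) =
     complexity u n + (\<Sum>w \<in> {w \<in> factors u. length w = n}. card (left_ext u w) - 1)"
proof -
  have "card (left_ext u w) = 1 + (card (left_ext u w) - 1)" if "w \<in> factors u" for w
    using left_ext_nonempty[OF that] finite_left_ext by (simp add: card_gt_0_iff)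
  then have "(\<Sum>w \<in> {w \<in> factors u. length w = n}. card (left_ext u w)) =
      (\<Sum>w \<in> {w \<in> factors u. length w = n}. 1 + (card (left_ext u w) - 1))"
    by (intro sum.cong) auto
  also have "\<dots> = complexity u n + (\<Sum>w \<in> {w \<in> factors u. length w = n}. card (left_ext u w) - 1)"
    unfolding complexity_def by (simp only: sum.distrib card_eq_sum)
  finally show ?thesis
    unfolding complexity_Suc_eq_sum .
qed

lemma not_affine_complexity_if_maximal_left_special:
  assumes "maximal_left_special m u w"
  shows "\<not> affine_complexity u"
proof
  assume "affine_complexity u"
  then obtain a b :: int where ab: "\<And>n. int (complexity u n) = a * int n + b"
    unfolding affine_complexity_def by blast
  define D where "D n = (\<Sum>v \<in> {v \<in> factors u. length v = n}. card (left_ext u v) - 1)" for n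
  have D_eq: "int (D n) = a" for n
    using complexity_Suc[of n] ab[of n] ab[of "Suc n"] by (simp add: D_def algebra_simps)
  have "D 0 = m - 1"
    unfolding D_def factors_length_0 using left_ext_prefix[of 0] by simp
  define k where "k = length w"
  have "w \<noteq> map u [0..<k]"
  proof
    assume "w = map u [0..<k]"
    then have "left_special u (w @ [u k])"
      using left_special_prefix[of "Suc k"] by simp
    then show False
      using assms letter_less unfolding maximal_left_special_def by blast
  qed
  moreover have "left_special u w"
    using assms unfolding maximal_left_special_def by blast
  ultimately have "(m - 1) + (card (left_ext u w) - 1) = (\<Sum>v \<in> {map u [0..<k], w}. card (left_ext u v) - 1)"
    using left_ext_prefix by simp
  also have "\<dots> \<le> D k"
    unfolding D_def using finite_factors_length prefix_in_factors \<open>left_special u w\<close>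
    by (intro sum_mono2) (auto simp: k_def left_special_def intro: Cons_in_factorsD)
  finally have "m \<le> D k"
    using \<open>left_special u w\<close> two_le_m left_special_iff_card by simp
  moreover have "D k = D 0"
    using D_eq by (metis of_nat_eq_iff)
  ultimately show False
    using \<open>D 0 = m - 1\<close> two_le_m by simp
qed

lemma complexity_if_left_special_prefix:
  assumes "\<And>w. left_special u w \<Longrightarrow> w = map u [0..<length w]"
  shows "complexity u n = (m - 1) * n + 1"
proof (induction n)
  case 0
  show ?case
    unfolding complexity_def factors_length_0 by simp
next
  case (Suc n)
  let ?F = "{w \<in> factors u. length w = n}" and ?p = "map u [0..<n]"
  have "(\<Sum>w \<in> ?F. card (left_ext u w) - 1) =
      (card (left_ext u ?p) - 1) + (\<Sum>w \<in> ?F - {?p}. card (left_ext u w) - 1)"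
    using finite_factors_length by (rule sum.remove) (simp add: prefix_in_factors)
  also have "card (left_ext u w) - 1 = 0" if "w \<in> ?F - {?p}" for w
  proof -
    have "\<not> left_special u w"
    proof
      assume "left_special u w"
      then have "w = map u [0..<length w]"
        by (rule assms)
      also have "length w = n"
        using that by simp
      finally have "w = ?p" .
      then show False
        using that by simp
    qed
    then show ?thesis
      using left_special_iff_card by simp
  qed
  then have "(\<Sum>w \<in> ?F - {?p}. card (left_ext u w) - 1) = 0"
    by simp
  finally have "(\<Sum>w \<in> ?F. card (left_ext u w) - 1) = m - 1"
    using left_ext_prefix by simp
  then show ?case
    using Suc complexity_Suc[of n] by simp
qed

theorem affine_complexity_iff_no_maximal_left_special:
  assumes "\<And>a b W k. a \<noteq> b \<Longrightarrow> infinite_left_ext u a W \<Longrightarrow> infinite_left_ext u b W \<Longrightarrow> W k = u k"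
  shows "affine_complexity u \<longleftrightarrow> \<not> (\<exists>w. maximal_left_special m u w)"
proof
  assume "\<not> (\<exists>w. maximal_left_special m u w)"
  have "w = map u [0..<length w]" if ls: "left_special u w" for w
  proof -
    obtain W where W: "\<And>n. left_special u (map W [0..<n])" and w: "w = map W [0..<length w]"
      using left_special_extends_infinitely \<open>\<not> (\<exists>w. maximal_left_special m u w)\<close> ls by blast
    obtain a b where ab: "a \<noteq> b" "infinite_left_ext u a W" "infinite_left_ext u b W"
      using left_special_prefixes_common_ext[OF W] by blast
    have "W k = u k" for k
      using ab by (rule assms)
    then have "map W [0..<length w] = map u [0..<length w]"
      by simp
    with w show ?thesis
      by (rule trans)
  qed
  then have "complexity u n = (m - 1) * n + 1" for n
    by (rule complexity_if_left_special_prefix)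
  then have "int (complexity u n) = int (m - 1) * int n + 1" for n
    by simp
  then show "affine_complexity u"
    unfolding affine_complexity_def by blast
next
  assume "affine_complexity u"
  then show "\<not> (\<exists>w. maximal_left_special m u w)"
    using not_affine_complexity_if_maximal_left_special by blast
qed

end

locale parry_substitution =
  fixes t :: "nat list"
  assumes two_le_length: "2 \<le> length t"
    and first_digit_pos: "1 \<le> t ! 0"
    and last_digit_pos: "1 \<le> t ! (length t - 1)"
begin

abbreviation "m \<equiv> length t"
abbreviation "u \<equiv> u_beta t"
abbreviation "t_last \<equiv> t ! (m - 1)"

definition phi_len :: "nat \<Rightarrow> nat" where
  "phi_len k = length (phi t k)"

text \<open>Since \<open>u = \<phi>(u)\<close>, the word \<open>u\<close> is the concatenation of the blocks
  \<open>\<phi>(u\<^sub>0) \<phi>(u\<^sub>1) \<dots>\<close>; block \<open>i\<close> starts at position \<open>start i\<close>.\<close>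
definition start :: "nat \<Rightarrow> nat" where
  "start i = (\<Sum>j<i. phi_len (u j))"

definition succ_letter :: "nat \<Rightarrow> nat" where
  "succ_letter k = (if k + 1 < m then k + 1 else 0)"

lemma phi_less: "k + 1 < m \<Longrightarrow> phi t k = replicate (t ! k) 0 @ [k + 1]"
  by (simp add: phi_def)

lemma phi_not_less: "\<not> k + 1 < m \<Longrightarrow> phi t k = replicate t_last 0"
  by (simp add: phi_def)

lemma phi_0: "phi t 0 = replicate (t ! 0) 0 @ [1]"
  using two_le_length phi_less[of 0] by simp

lemma phi_len_less: "k + 1 < m \<Longrightarrow> phi_len k = t ! k + 1"
  by (simp add: phi_len_def phi_less)

lemma phi_len_not_less: "\<not> k + 1 < m \<Longrightarrow> phi_len k = t_last"
  by (simp add: phi_len_def phi_not_less)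

lemma phi_len_pos: "1 \<le> phi_len k"
  using last_digit_pos by (cases "k + 1 < m") (auto simp: phi_len_less phi_len_not_less)

lemma nth_phi_zero: "k + 1 < m \<Longrightarrow> r < t ! k \<Longrightarrow> phi t k ! r = 0"
  by (simp add: phi_less nth_append)

lemma nth_phi_letter: "k + 1 < m \<Longrightarrow> phi t k ! (t ! k) = k + 1"
  by (simp add: phi_less nth_append)

lemma nth_phi_not_less: "\<not> k + 1 < m \<Longrightarrow> r < t_last \<Longrightarrow> phi t k ! r = 0"
  by (simp add: phi_not_less)

lemma last_phi: "phi t k ! (phi_len k - 1) = succ_letter k"
proof (cases "k + 1 < m")
  case True
  then show ?thesis
    by (simp add: phi_len_less nth_phi_letter succ_letter_def)
next
  case False
  then show ?thesis
    using last_digit_pos by (simp add: phi_len_not_less nth_phi_not_less succ_letter_def)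
qed

lemma set_phi_subset: "set (phi t k) \<subseteq> {..<m}"
  using two_le_length by (cases "k + 1 < m") (auto simp: phi_def)

lemma phi_word_append: "phi_word t (xs @ ys) = phi_word t xs @ phi_word t ys"
  by (simp add: phi_word_def)

lemma length_phi_word: "length (phi_word t xs) = (\<Sum>x\<leftarrow>xs. phi_len x)"
  by (induction xs) (auto simp: phi_word_def phi_len_def)

lemma length_phi_word_ge: "length xs \<le> length (phi_word t xs)"
proof (induction xs)
  case (Cons x xs)
  then show ?case
    using phi_len_pos[of x] by (simp add: length_phi_word)
qed (simp add: phi_word_def)

lemma set_phi_word: "set xs \<subseteq> {..<m} \<Longrightarrow> set (phi_word t xs) \<subseteq> {..<m}"
  using set_phi_subset by (auto simp: phi_word_def)

lemma phi_iter_Suc: "phi_iter t (Suc n) = phi_word t (phi_iter t n)"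
  by (simp add: phi_iter_def)

lemma phi_iter_prefix: "n \<le> n' \<Longrightarrow> \<exists>zs. phi_iter t n' = phi_iter t n @ zs"
proof (induction n' rule: dec_induct)
  case (step n')
  have "\<exists>zs. phi_iter t (Suc k) = phi_iter t k @ zs" for k
  proof (induction k)
    case 0
    have "phi_iter t 1 = [0] @ replicate (t ! 0 - 1) 0 @ [1]"
      using first_digit_pos phi_0 by (cases "t ! 0") (auto simp: phi_iter_def phi_word_def)
    then show ?case
      by (auto simp: phi_iter_def)
  next
    case (Suc k)
    then show ?case
      by (metis phi_iter_Suc phi_word_append)
  qed
  then show ?case
    using step.IH by (metis append.assoc)
qed auto

lemma length_phi_iter: "n < length (phi_iter t n)"
proof (induction n)
  case (Suc n)
  obtain zs where zs: "phi_iter t n = 0 # zs"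
    using phi_iter_prefix[of 0 n] by (auto simp: phi_iter_def)
  have "length (phi_iter t (Suc n)) = t ! 0 + 1 + length (phi_word t zs)"
    by (simp add: phi_iter_Suc zs phi_word_def phi_0)
  then show ?case
    using Suc zs first_digit_pos length_phi_word_ge[of zs] by simp
qed (simp add: phi_iter_def)

lemma u_beta_nth: "i < length (phi_iter t n) \<Longrightarrow> u i = phi_iter t n ! i"
proof -
  assume i: "i < length (phi_iter t n)"
  let ?n0 = "LEAST n. i < length (phi_iter t n)"
  have "?n0 \<le> n" "i < length (phi_iter t ?n0)"
    using i by (auto intro: Least_le LeastI)
  then show ?thesis
    using phi_iter_prefix[of ?n0 n] by (auto simp: u_beta_def nth_append)
qed

lemma take_phi_iter: "i \<le> length (phi_iter t n) \<Longrightarrow> take i (phi_iter t n) = map u [0..<i]"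
  by (intro nth_equalityI) (simp_all add: u_beta_nth[of _ n])

lemma set_phi_iter: "set (phi_iter t n) \<subseteq> {..<m}"
proof (induction n)
  case 0
  then show ?case
    using two_le_length by (auto simp: phi_iter_def)
next
  case (Suc n)
  then show ?case
    by (simp add: phi_iter_Suc set_phi_word)
qed

lemma u_less: "u i < m"
  using length_phi_iter[of i] u_beta_nth set_phi_iter nth_mem by fastforce

lemma u_0: "u 0 = 0"
  using u_beta_nth[of 0 0] by (simp add: phi_iter_def)

lemma start_0 [simp]: "start 0 = 0"
  by (simp add: start_def)

lemma start_Suc: "start (Suc i) = start i + phi_len (u i)"
  by (simp add: start_def)

lemma start_1: "start 1 = t ! 0 + 1"
  using two_le_length by (simp add: start_def u_0 phi_len_less)

lemma start_add: "start (i + k) = start i + (\<Sum>l<k. phi_len (u (i + l)))"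
  by (induction k) (simp_all add: start_Suc)

lemma u_start_add:
  assumes "r < phi_len (u i)"
  shows "u (start i + r) = phi t (u i) ! r"
proof -
  have "Suc i \<le> length (phi_iter t (Suc i))"
    using length_phi_iter[of "Suc i"] by simp
  then obtain zs where zs: "phi_iter t (Suc i) = map u [0..<Suc i] @ zs"
    using take_phi_iter by (metis append_take_drop_id)
  have "start i = length (phi_word t (map u [0..<i]))"
    by (simp add: start_def length_phi_word interv_sum_list_conv_sum_set_nat atLeast0LessThan)
  moreover have "phi_iter t (Suc (Suc i)) = phi_word t (map u [0..<i]) @ phi t (u i) @ phi_word t zs"
    unfolding phi_iter_Suc[of "Suc i"] zs by (simp add: phi_word_def)
  ultimately show ?thesis
    using assms u_beta_nth[of "start i + r" "Suc (Suc i)"] by (simp add: nth_append phi_len_def)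
qed

lemma strict_mono_start: "strict_mono start"
  unfolding strict_mono_Suc_iff using phi_len_pos by (simp add: start_Suc Suc_le_eq)

lemma start_less_iff: "start i < start j \<longleftrightarrow> i < j"
  using strict_mono_less[OF strict_mono_start] .

lemma start_le_iff: "start i \<le> start j \<longleftrightarrow> i \<le> j"
  using strict_mono_less_eq[OF strict_mono_start] .

lemma start_gt: "1 \<le> i \<Longrightarrow> i < start i"
proof (induction i rule: dec_induct)
  case base
  then show ?case
    using start_1 first_digit_pos by simp
next
  case (step i)
  then show ?case
    using start_less_iff[of i "Suc i"] by simp
qed

lemma u_before_start: "u (start (Suc i) - 1) = succ_letter (u i)"
proof -
  have "start (Suc i) - 1 = start i + (phi_len (u i) - 1)"
    using phi_len_pos[of "u i"] by (simp add: start_Suc)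
  then show ?thesis
    using u_start_add[of "phi_len (u i) - 1" i] phi_len_pos[of "u i"] last_phi by simp
qed

lemma ex_block: "\<exists>i. start i \<le> p \<and> p < start (Suc i)"
proof -
  define i where "i = (LEAST i. p < start (Suc i))"
  have "p < start (Suc p)"
    using strict_mono_imp_increasing[OF strict_mono_start, of "Suc p"] by simp
  then have "p < start (Suc i)"
    unfolding i_def by (rule LeastI)
  moreover have "start i \<le> p"
  proof (cases i)
    case (Suc j)
    then have "\<not> p < start (Suc j)"
      using not_less_Least[of j "\<lambda>i. p < start (Suc i)"] unfolding i_def by simp
    then show ?thesis
      using Suc by simp
  qed simp
  ultimately show ?thesis
    by blast
qed

lemma u_in_block: "start i \<le> p \<Longrightarrow> p < start (Suc i) \<Longrightarrow> u p = phi t (u i) ! (p - start i)"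
  using u_start_add[of "p - start i" i] by (simp add: start_Suc)

lemma nonzero_ends_block:
  assumes "u p \<noteq> 0"
  obtains i where "Suc p = start (Suc i)" "u i + 1 < m" "u p = u i + 1" "start i + t ! (u i) = p"
proof -
  obtain i where i: "start i \<le> p" "p < start (Suc i)"
    using ex_block by blast
  have up: "u p = phi t (u i) ! (p - start i)"
    using u_in_block[OF i] .
  have r: "p - start i < phi_len (u i)"
    using i by (simp add: start_Suc)
  have less: "u i + 1 < m"
    using up assms r nth_phi_not_less phi_len_not_less by fastforce
  have "\<not> p - start i < t ! (u i)"
    using up assms nth_phi_zero[OF less] by auto
  then have "p - start i = t ! (u i)"
    using r phi_len_less[OF less] by simp
  then show ?thesis
    using that[of i] i up less nth_phi_letter[OF less] phi_len_less[OF less] by (simp add: start_Suc)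
qed

lemma u_eq_0_in_block: "start i \<le> p \<Longrightarrow> Suc p < start (Suc i) \<Longrightarrow> u p = 0"
  using u_in_block[of i p] nth_phi_zero nth_phi_not_less
  by (cases "u i + 1 < m") (auto simp: start_Suc phi_len_less phi_len_not_less)

lemma zero_before_start_Suc: "u (start (Suc i) - 1) = 0 \<Longrightarrow> u i = m - 1"
  using u_before_start[of i] u_less[of i] by (auto simp: succ_letter_def split: if_splits)

text \<open>Two adjacent letters \<open>c c\<close> with \<open>c \<noteq> 0\<close> would end two consecutive blocks, the second
  one being \<open>\<phi>(c - 1) = c\<close>; so \<open>t\<^sub>c = 0\<close> and \<open>u\<close> contains the letters
  \<open>(c - 1) (c - 1)\<close>. Descending to \<open>c = 1\<close> contradicts \<open>t\<^sub>1 \<ge> 1\<close>.\<close>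
lemma repeated_letter_eq_0: "u p = c \<Longrightarrow> u (Suc p) = c \<Longrightarrow> c = 0"
proof (induction c arbitrary: p)
  case (Suc c)
  obtain i where i: "Suc p = start (Suc i)" "u p = u i + 1"
    using nonzero_ends_block[of p] Suc.prems by auto
  obtain i' where i': "Suc (Suc p) = start (Suc i')" "u (Suc p) = u i' + 1"
      "start i' + t ! (u i') = Suc p"
    using nonzero_ends_block[of "Suc p"] Suc.prems by auto
  have "start i' \<le> start (Suc i)" "start (Suc i) < start (Suc i')"
    using i i' by simp_all
  then have "i' = Suc i"
    unfolding start_le_iff start_less_iff by simp
  then have "t ! c = 0" "u i = c" "u (Suc i) = c"
    using i i' Suc.prems by auto
  then show ?case
    using Suc.IH[of i] first_digit_pos by simp
qed simp

lemma no_repeated_last: "u i = m - 1 \<Longrightarrow> u (Suc i) \<noteq> m - 1"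
  using repeated_letter_eq_0[of i "m - 1"] two_le_length by auto

definition phi_len_bound :: nat where
  "phi_len_bound = sum_list t + 1"

lemma phi_len_le_bound: "phi_len k \<le> phi_len_bound"
proof -
  have "t ! j \<le> sum_list t" if "j < m" for j
    using that by (intro elem_le_sum_list)
  moreover have "m - 1 < m"
    using two_le_length by simp
  ultimately show ?thesis
    by (cases "k + 1 < m") (simp_all add: phi_len_less phi_len_not_less phi_len_bound_def le_SucI)
qed

lemma start_add_le: "start (i + k) \<le> start i + k * phi_len_bound"
proof (induction k)
  case (Suc k)
  then show ?case
    using phi_len_le_bound[of "u (i + k)"] by (simp add: start_Suc)
qed simp

lemma nonzero_nearby: "\<exists>f < 2 * phi_len_bound. u (p + f) \<noteq> 0"
proof -
  obtain i where i: "start i \<le> p" "p < start (Suc i)"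
    using ex_block by blast
  have "\<exists>j\<in>{i, Suc i}. u j + 1 < m"
    using no_repeated_last[of i] u_less[of i] u_less[of "Suc i"] by force
  then obtain j where j: "j \<in> {i, Suc i}" "u (start (Suc j) - 1) \<noteq> 0"
    using u_before_start by (force simp: succ_letter_def)
  have "start (i + 2) \<le> start i + 2 * phi_len_bound"
    by (rule start_add_le)
  moreover have "p < start (Suc j)" "start (Suc j) \<le> start (i + 2)"
    using i j(1) start_le_iff[of "Suc j" "i + 2"] start_le_iff[of "Suc i" "Suc j"] by auto
  ultimately show ?thesis
    using i j(2) by (intro exI[of _ "start (Suc j) - 1 - p"]) auto
qed

lemma left_special_letter_eq_0:
  "u (Suc p) = c \<Longrightarrow> u (Suc p') = c \<Longrightarrow> u p \<noteq> u p' \<Longrightarrow> c = 0"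
proof (induction c arbitrary: p p')
  case (Suc c)
  obtain i where i: "Suc (Suc p) = start (Suc i)" "u (Suc p) = u i + 1" "start i + t ! (u i) = Suc p"
    using nonzero_ends_block[of "Suc p"] Suc.prems(1) by auto
  obtain i' where i': "Suc (Suc p') = start (Suc i')" "u (Suc p') = u i' + 1" "start i' + t ! (u i') = Suc p'"
    using nonzero_ends_block[of "Suc p'"] Suc.prems(2) by auto
  have c: "u i = c" "u i' = c"
    using i(2) i'(2) Suc.prems(1,2) by simp_all
  show ?case
  proof (cases "t ! c = 0")
    case False
    then have "u p = 0" "u p' = 0"
      using u_eq_0_in_block[of i p] u_eq_0_in_block[of i' p'] i(1,3) i'(1,3) c by simp_all
    then show ?thesis
      using Suc.prems(3) by simp
  next
    case True
    then have "Suc p = start i" "Suc p' = start i'"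
      using i(3) i'(3) c by simp_all
    then obtain j j' where j: "i = Suc j" "i' = Suc j'"
      by (cases i; cases i') simp_all
    then have "u p = succ_letter (u j)" "u p' = succ_letter (u j')"
      using u_before_start[of j] u_before_start[of j'] \<open>Suc p = start i\<close> \<open>Suc p' = start i'\<close>
      by (metis diff_Suc_1)+
    then have "u j \<noteq> u j'"
      using Suc.prems(3) by auto
    then have "c = 0"
      using Suc.IH[of j j'] c j by simp
    then show ?thesis
      using True first_digit_pos by simp
  qed
qed simp

lemma u_in_zero_block: "u i = m - 1 \<Longrightarrow> r < t_last \<Longrightarrow> u (start i + r) = 0"
  using u_start_add[of r i] two_le_length by (simp add: phi_len_not_less nth_phi_not_less)

lemma zero_run_before_start:
  assumes "Suc p \<le> start k" and zeros: "\<forall>q. Suc p \<le> q \<and> q < start k \<longrightarrow> u q = 0"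
  shows "start k - Suc p \<in> {0, t_last} \<and> (\<exists>i. Suc p = start (Suc i)) \<or>
         start k - Suc p \<notin> {0, t_last} \<and> u p = 0"
proof (cases "Suc p = start k")
  case True
  then obtain i where "k = Suc i"
    by (cases k) auto
  then show ?thesis
    using True by auto
next
  case False
  then have "Suc p < start k"
    using assms(1) by simp
  then obtain k1 where k1: "k = Suc k1"
    by (cases k) auto
  have "u (start (Suc k1) - 1) = 0"
    using zeros \<open>Suc p < start k\<close> k1 by simp
  then have "u k1 = m - 1"
    by (rule zero_before_start_Suc)
  then have start_k: "start k = start k1 + t_last"
    using k1 two_le_length by (simp add: start_Suc phi_len_not_less)
  consider "start k1 < Suc p" | "start k1 = Suc p" | "Suc p < start k1"
    by linarith
  then show ?thesis
  proof cases
    case 1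
    then have "u p = 0"
      using u_eq_0_in_block[of k1 p] \<open>Suc p < start k\<close> k1 by simp
    then show ?thesis
      using 1 start_k \<open>Suc p < start k\<close> by auto
  next
    case 2
    then obtain i where "k1 = Suc i"
      by (cases k1) auto
    then have "Suc p = start (Suc i)"
      using 2 by simp
    then show ?thesis
      using 2 start_k by auto
  next
    case 3
    then obtain k2 where k2: "k1 = Suc k2"
      by (cases k1) auto
    have "start k1 < start k"
      using k1 start_less_iff by simp
    then have "Suc p \<le> start k1 - 1" "start k1 - 1 < start k"
      using 3 by simp_all
    then have "u (start (Suc k2) - 1) = 0"
      using zeros k2 by blast
    then have "u k2 = m - 1"
      by (rule zero_before_start_Suc)
    then show ?thesis
      using no_repeated_last \<open>u k1 = m - 1\<close> k2 by simp
  qed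
qed

text \<open>The letter \<open>c \<noteq> 0\<close> ends a block \<open>\<phi>(c - 1)\<close>, possibly preceded by the zero block
  \<open>\<phi>(m - 1)\<close>. Hence a run of \<open>f\<close> zeros ending at \<open>c\<close> either starts at a block boundary, with
  \<open>f \<in> {t\<^sub>c, t\<^sub>c + t\<^sub>m}\<close>, or is preceded by another zero.\<close>
lemma zero_run_sync:
  assumes zeros: "\<forall>g<f. u (Suc p + g) = 0" and "u (Suc p + f) = c" "c \<noteq> 0"
  shows "f \<in> {t ! (c - 1), t ! (c - 1) + t_last} \<and> (\<exists>i. Suc p = start (Suc i)) \<or>
         f \<notin> {t ! (c - 1), t ! (c - 1) + t_last} \<and> u p = 0"
proof -
  obtain k where k: "Suc (Suc p + f) = start (Suc k)" "u k = c - 1" "start k + t ! (c - 1) = Suc p + f"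
    using nonzero_ends_block[of "Suc p + f"] assms(2,3) by (metis add_diff_cancel_right')
  show ?thesis
  proof (cases "f < t ! (c - 1)")
    case True
    then have "u p = 0"
      using u_eq_0_in_block[of k p] k by simp
    then show ?thesis
      using True by auto
  next
    case False
    then have "Suc p \<le> start k" "start k - Suc p = f - t ! (c - 1)"
      using k(3) by simp_all
    moreover have "\<forall>q. Suc p \<le> q \<and> q < start k \<longrightarrow> u q = 0"
      using zeros k(3) by (metis add_diff_inverse_nat add_less_cancel_left not_less trans_less_add1)
    ultimately show ?thesis
      using zero_run_before_start[of p k] False by auto
  qed
qed

lemma left_special_at_block_starts:
  assumes "u p \<noteq> u p'" and agree: "\<forall>k<L. u (Suc p + k) = u (Suc p' + k)"
    and "f < L" "u (Suc p + f) \<noteq> 0"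
  shows "\<exists>i i'. Suc p = start (Suc i) \<and> Suc p' = start (Suc i') \<and> u i \<noteq> u i'"
proof -
  define f0 where "f0 = (LEAST f. u (Suc p + f) \<noteq> 0)"
  have "u (Suc p + f0) \<noteq> 0" "f0 \<le> f"
    unfolding f0_def using assms(4) by (auto intro: LeastI Least_le)
  moreover have zeros: "\<forall>g<f0. u (Suc p + g) = 0"
    unfolding f0_def using not_less_Least by blast
  ultimately have "\<forall>g<f0. u (Suc p' + g) = 0" "u (Suc p' + f0) = u (Suc p + f0)"
    using agree \<open>f < L\<close> by auto
  note sync = zero_run_sync[OF zeros refl \<open>u (Suc p + f0) \<noteq> 0\<close>]
    zero_run_sync[OF \<open>\<forall>g<f0. u (Suc p' + g) = 0\<close> this(2) \<open>u (Suc p + f0) \<noteq> 0\<close>]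
  show ?thesis
  proof (cases "f0 \<in> {t ! (u (Suc p + f0) - 1), t ! (u (Suc p + f0) - 1) + t_last}")
    case True
    then obtain i i' where "Suc p = start (Suc i)" "Suc p' = start (Suc i')"
      using sync by blast
    moreover from this have "u p = succ_letter (u i)" "u p' = succ_letter (u i')"
      using u_before_start[of i] u_before_start[of i'] by (metis diff_Suc_1)+
    ultimately show ?thesis
      using \<open>u p \<noteq> u p'\<close> by fastforce
  next
    case False
    then show ?thesis
      using sync \<open>u p \<noteq> u p'\<close> by auto
  qed
qed

text \<open>The first nonzero letter at or after \<open>start i\<close> ends block \<open>i\<close>, unless
  \<open>u i = m - 1\<close>; then block \<open>i\<close> consists of zeros and the letter ends block \<open>i + 1\<close>.\<close>
definition lead_zeros :: "nat \<Rightarrow> nat" where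
  "lead_zeros i = (if u i + 1 < m then t ! (u i) else t_last + t ! (u (Suc i)))"

definition lead_letter :: "nat \<Rightarrow> nat" where
  "lead_letter i = (if u i + 1 < m then u i + 1 else u (Suc i) + 1)"

lemma lead_letter_after_zeros:
  "u (start i + lead_zeros i) = lead_letter i" "lead_letter i \<noteq> 0"
  "\<forall>f<lead_zeros i. u (start i + f) = 0" "start i + lead_zeros i < start (Suc (Suc i))"
proof -
  have lead: "u (start j + t ! (u j)) = u j + 1" "\<forall>f<t ! (u j). u (start j + f) = 0"
    "start (Suc j) = start j + t ! (u j) + 1" if "u j + 1 < m" for j
    using that u_start_add[of "t ! (u j)" j] u_eq_0_in_block[of j]
    by (simp_all add: start_Suc phi_len_less nth_phi_letter)
  have "u (start i + lead_zeros i) = lead_letter i \<and> (\<forall>f<lead_zeros i. u (start i + f) = 0) \<and>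
    start i + lead_zeros i < start (Suc (Suc i))"
  proof (cases "u i + 1 < m")
    case True
    then show ?thesis
      using lead[of i] start_less_iff[of "Suc i" "Suc (Suc i)"]
      by (simp add: lead_zeros_def lead_letter_def)
  next
    case False
    then have "u i = m - 1"
      using u_less[of i] by simp
    then have "u (Suc i) + 1 < m"
      using no_repeated_last u_less[of "Suc i"] by fastforce
    moreover have start_Suc_i: "start (Suc i) = start i + t_last"
      using False by (simp add: start_Suc phi_len_not_less)
    moreover have "u (start i + f) = 0" if "f < t_last + t ! (u (Suc i))" for f
    proof (cases "f < t_last")
      case True
      then show ?thesis
        using u_in_zero_block[OF \<open>u i = m - 1\<close>] by simp
    next
      case False
      then have "start i + f = start (Suc i) + (f - t_last)" "f - t_last < t ! (u (Suc i))"
        using start_Suc_i that by simp_all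
      then show ?thesis
        using lead(2)[OF \<open>u (Suc i) + 1 < m\<close>] by simp
    qed
    ultimately show ?thesis
      using False lead(1,3)[of "Suc i"] by (simp add: lead_zeros_def lead_letter_def add.assoc)
  qed
  then show "u (start i + lead_zeros i) = lead_letter i" "\<forall>f<lead_zeros i. u (start i + f) = 0"
    "start i + lead_zeros i < start (Suc (Suc i))"
    by blast+
  show "lead_letter i \<noteq> 0"
    by (simp add: lead_letter_def)
qed

lemma u_eq_from_lead:
  "u i = (if lead_zeros i = t ! (lead_letter i - 1) then lead_letter i - 1 else m - 1)"
  using last_digit_pos u_less[of i] by (cases "u i + 1 < m") (auto simp: lead_zeros_def lead_letter_def)

lemma image_agree_imp_letter_eq:
  assumes agree: "\<forall>l<L. u (start i + l) = u (start i' + l)"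
    and L: "start (Suc (Suc i)) \<le> start i + L"
  shows "u i = u i'"
proof -
  note lead = lead_letter_after_zeros
  have "lead_zeros i < L"
    using lead(4)[of i] L by simp
  then have "u (start i' + lead_zeros i) = lead_letter i" "\<forall>f<lead_zeros i. u (start i' + f) = 0"
    using agree lead(1,3)[of i] by auto
  then have "lead_zeros i' = lead_zeros i"
    using lead(1-3)[of i'] lead(2)[of i] by (metis linorder_neqE_nat)
  moreover have "lead_letter i' = lead_letter i"
    using lead(1)[of i'] \<open>u (start i' + lead_zeros i) = lead_letter i\<close> calculation by simp
  ultimately show ?thesis
    using u_eq_from_lead[of i] u_eq_from_lead[of i'] by simp
qed

lemma image_agree_imp_agree:
  "\<forall>l<L. u (start i + l) = u (start i' + l) \<Longrightarrow> start (i + k + 1) \<le> start i + L \<Longrightarrow> j < k \<Longrightarrow>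
   u (i + j) = u (i' + j)"
proof (induction k arbitrary: i i' L j)
  case (Suc k)
  have L: "start (Suc (Suc i)) \<le> start i + L"
    using Suc.prems(2) start_le_iff[of "Suc (Suc i)" "i + Suc k + 1"] by simp
  have eq: "u i = u i'"
    using image_agree_imp_letter_eq[OF Suc.prems(1) L] .
  show ?case
  proof (cases j)
    case (Suc j')
    define L' where "L' = L - phi_len (u i)"
    have start_Suc_i: "start (Suc i) = start i + phi_len (u i)" "start (Suc i') = start i' + phi_len (u i)"
      using eq by (simp_all add: start_Suc)
    moreover have "phi_len (u i) \<le> L"
      using L start_less_iff[of "Suc i" "Suc (Suc i)"] start_Suc_i by simp
    ultimately have "\<forall>l<L'. u (start (Suc i) + l) = u (start (Suc i') + l)"
      "start (Suc i + k + 1) \<le> start (Suc i) + L'"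
      using Suc.prems(1,2) by (auto simp: L'_def add.assoc)
    moreover have "j' < k"
      using Suc.prems(3) \<open>j = Suc j'\<close> by simp
    ultimately have "u (Suc i + j') = u (Suc i' + j')"
      by (rule Suc.IH)
    then show ?thesis
      using \<open>j = Suc j'\<close> by simp
  qed (use eq in simp)
qed simp

lemma agree_imp_start_diff_eq:
  "\<forall>k<n. u (i + k) = u (i' + k) \<Longrightarrow> start (i + n) - start i = start (i' + n) - start i'"
  by (simp add: start_add)

lemma agree_imp_image_agree:
  assumes agree: "\<forall>k<n. u (i + k) = u (i' + k)" and p: "p < start (i + n) - start i"
  shows "u (start i + p) = u (start i' + p)"
proof -
  obtain j where j: "start j \<le> start i + p" "start i + p < start (Suc j)"
    using ex_block by blast
  then have "i \<le> j" "j < i + n"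
    using p start_less_iff[of i "Suc j"] start_less_iff[of j "i + n"] by auto
  then obtain l where l: "j = i + l" "l < n"
    using le_Suc_ex by force
  define r where "r = start i + p - start j"
  have r: "r < phi_len (u (i + l))"
    using j l r_def by (simp add: start_Suc)
  have "start (i' + l) - start i' = start (i + l) - start i"
    using agree l(2) agree_imp_start_diff_eq[of l i i'] by simp
  moreover have "start i \<le> start (i + l)" "start i' \<le> start (i' + l)"
    by (simp_all add: start_le_iff)
  ultimately have "start (i' + l) + r = start i' + p"
    using r_def l j by simp
  moreover have "start i + p = start (i + l) + r"
    using r_def l j by simp
  then have "u (start i + p) = phi t (u (i + l)) ! r"
    using u_start_add[OF r] by simp
  ultimately show ?thesis
    using u_start_add[of r "i' + l"] r agree l by simp
qed

lemma succ_letter_mod: "k < m \<Longrightarrow> succ_letter k = Suc k mod m"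
  by (cases "Suc k = m") (simp_all add: succ_letter_def)

lemma succ_letter_surj: "b < m \<Longrightarrow> \<exists>a<m. succ_letter a = b"
  using two_le_length by (cases b) (auto simp: succ_letter_def intro: exI[of _ "m - 1"])

lemma letter_occurs: "k < m \<Longrightarrow> \<exists>i. u i = k"
proof (induction k)
  case (Suc k)
  then obtain i where "u i = k"
    by auto
  then have "u (start (Suc i) - 1) = Suc k"
    using u_before_start[of i] Suc.prems by (simp add: succ_letter_def)
  then show ?case
    by blast
qed (use u_0 in blast)

lemma left_ext_prefix_antimono:
  "x \<in> left_ext u (map u [0..<n]) \<Longrightarrow> n' \<le> n \<Longrightarrow> x \<in> left_ext u (map u [0..<n'])"
  unfolding in_left_ext_prefix_iff by force

lemma left_ext_prefix_succ_letter:
  assumes "x \<in> left_ext u (map u [0..<n])"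
  shows "succ_letter x \<in> left_ext u (map u [0..<start n])"
proof -
  obtain i where i: "u i = x" "\<forall>k<n. u (Suc i + k) = u (0 + k)"
    using assms unfolding in_left_ext_prefix_iff by auto
  have "start (Suc i + n) - start (Suc i) = start n"
    using agree_imp_start_diff_eq[OF i(2)] by simp
  then have "\<forall>p<start n. u (start (Suc i) + p) = u p"
    using agree_imp_image_agree[OF i(2)] by simp
  moreover have "Suc (start (Suc i) - 1) = start (Suc i)"
    using start_less_iff[of 0 "Suc i"] by simp
  ultimately show ?thesis
    unfolding in_left_ext_prefix_iff using u_before_start[of i] i(1) by metis
qed

lemma left_ext_prefix_1: "a < m \<Longrightarrow> a \<in> left_ext u (map u [0..<1])"
proof -
  assume "a < m"
  have "m - 1 < m"
    using two_le_length by simp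
  then obtain i where "u i = m - 1"
    using letter_occurs by blast
  define j where "j = start (Suc i) - 1"
  have "u j = 0"
    using u_before_start[of i] \<open>u i = m - 1\<close> two_le_length by (simp add: j_def succ_letter_def)
  moreover have "start 1 \<le> start (Suc i)"
    by (simp add: start_le_iff)
  then have "1 \<le> j"
    using start_1 first_digit_pos by (simp add: j_def)
  ultimately have base: "u (j - 1) \<in> left_ext u (map u [0..<1])"
    unfolding in_left_ext_prefix_iff using u_0 by (intro exI[of _ "j - 1"]) simp
  have "(u (j - 1) + k) mod m \<in> left_ext u (map u [0..<1])" for k
  proof (induction k)
    case 0
    show ?case
      using base u_less[of "j - 1"] by simp
  next
    case (Suc k)
    have "succ_letter ((u (j - 1) + k) mod m) \<in> left_ext u (map u [0..<start 1])"
      by (rule left_ext_prefix_succ_letter[OF Suc.IH])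
    then have "succ_letter ((u (j - 1) + k) mod m) \<in> left_ext u (map u [0..<1])"
      by (rule left_ext_prefix_antimono) (use start_gt[of 1] in simp)
    moreover have "(u (j - 1) + k) mod m < m"
      using two_le_length by (intro mod_less_divisor) linarith
    then have "succ_letter ((u (j - 1) + k) mod m) = (u (j - 1) + Suc k) mod m"
      by (simp add: succ_letter_mod mod_Suc_eq)
    ultimately show ?case
      by simp
  qed
  from this[of "a + m - u (j - 1)"] show ?thesis
    using \<open>a < m\<close> u_less[of "j - 1"] by simp
qed

lemma left_ext_prefix: "left_ext u (map u [0..<n]) = {..<m}"
proof
  show "left_ext u (map u [0..<n]) \<subseteq> {..<m}"
    unfolding left_ext_def Cons_in_factors_iff using u_less by auto
  show "{..<m} \<subseteq> left_ext u (map u [0..<n])"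
  proof (induction n rule: less_induct)
    case (less n)
    show ?case
    proof (cases "n \<le> 1")
      case True
      then show ?thesis
        using left_ext_prefix_1 left_ext_prefix_antimono by blast
    next
      case False
      have "a \<in> left_ext u (map u [0..<start (n - 1)])" if "a < m" for a
        using succ_letter_surj[OF that] less.IH[of "n - 1"] False left_ext_prefix_succ_letter by fastforce
      moreover have "1 \<le> n - 1"
        using False by simp
      then have "n \<le> start (n - 1)"
        using start_gt[of "n - 1"] by simp
      ultimately show ?thesis
        using left_ext_prefix_antimono by blast
    qed
  qed
qed

lemma succ_letter_inj: "a < m \<Longrightarrow> b < m \<Longrightarrow> succ_letter a = succ_letter b \<Longrightarrow> a = b"
  by (auto simp: succ_letter_def split: if_splits)

lemma infinite_left_ext_less: "infinite_left_ext u a W \<Longrightarrow> a < m"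
  unfolding infinite_left_ext_iff using u_less by blast

lemma left_special_branch_at_block_starts:
  assumes "a \<noteq> b" "infinite_left_ext u a W" "infinite_left_ext u b W" "2 * phi_len_bound \<le> N"
  shows "\<exists>i. succ_letter (u i) = a \<and> (\<forall>k<N. u (start (Suc i) + k) = W k)"
proof -
  obtain p p' where p: "u p = a" "\<forall>k<N. u (Suc p + k) = W k"
    and p': "u p' = b" "\<forall>k<N. u (Suc p' + k) = W k"
    using assms(2,3) unfolding infinite_left_ext_iff by meson
  obtain f where "f < 2 * phi_len_bound" "u (Suc p + f) \<noteq> 0"
    using nonzero_nearby by blast
  then obtain i where "Suc p = start (Suc i)"
    using left_special_at_block_starts[of p p' N f] p p' assms(1,4) by auto
  then show ?thesis
    using p u_before_start[of i] by (metis diff_Suc_1)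
qed

lemma block_aligned_agree:
  assumes "\<forall>k<N. u (start (Suc i) + k) = W k" "\<forall>k<N'. u (start (Suc i') + k) = W k"
    and "(k + 2) * phi_len_bound \<le> N" "(k + 2) * phi_len_bound \<le> N'"
  shows "u (Suc i + k) = u (Suc i' + k)"
proof -
  have "start (Suc i + (k + 2)) \<le> start (Suc i) + (k + 2) * phi_len_bound"
    by (rule start_add_le)
  moreover have "\<forall>l<(k + 2) * phi_len_bound. u (start (Suc i) + l) = u (start (Suc i') + l)"
    using assms by auto
  ultimately show ?thesis
    using image_agree_imp_agree[of "(k + 2) * phi_len_bound" "Suc i" "Suc i'" "Suc k" k] by simp
qed

text \<open>An occurrence of a prefix of length \<open>sync_window n\<close> of a left special branch is
  aligned with the blocks, so its preimage of length \<open>n\<close> is determined.\<close>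
definition sync_window :: "nat \<Rightarrow> nat" where
  "sync_window n = (n + 4) * phi_len_bound"

lemma desubstitute_branch:
  assumes "a \<noteq> b" "infinite_left_ext u a W" "infinite_left_ext u b W"
  obtains V x y where "x \<noteq> y" "infinite_left_ext u x V" "infinite_left_ext u y V"
    "\<And>n. \<exists>i. (\<forall>k<sync_window n. u (start (Suc i) + k) = W k) \<and> (\<forall>k<n. u (Suc i + k) = V k)"
proof -
  have occ: "\<exists>i. succ_letter (u i) = c \<and> (\<forall>k<sync_window n. u (start (Suc i) + k) = W k)"
    if "c \<in> {a, b}" for c n
  proof -
    have "2 * phi_len_bound \<le> sync_window n"
      by (simp add: sync_window_def)
    then show ?thesis
      using that assms left_special_branch_at_block_starts[of a b W] left_special_branch_at_block_starts[of b a W]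
      by auto
  qed
  then obtain occ_a where occ_a: "\<And>n. \<forall>k<sync_window n. u (start (Suc (occ_a n)) + k) = W k"
    by (metis insertI1)
  define V where "V k = u (Suc (occ_a k) + k)" for k
  have V: "\<forall>k<n. u (Suc i + k) = V k"
    if "\<forall>k<sync_window n. u (start (Suc i) + k) = W k" for i n
  proof (intro allI impI)
    fix k assume "k < n"
    then have "(k + 2) * phi_len_bound \<le> sync_window n" "(k + 2) * phi_len_bound \<le> sync_window k"
      unfolding sync_window_def by (intro mult_le_mono1, simp)+
    then show "u (Suc i + k) = V k"
      using block_aligned_agree[OF that occ_a[of k]] by (simp add: V_def)
  qed
  have branch: "infinite_left_ext u x V" if c: "c \<in> {a, b}" and x: "x < m" "succ_letter x = c" for c x
    unfolding infinite_left_ext_iff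
  proof
    fix n
    obtain i where "succ_letter (u i) = c" "\<forall>k<sync_window n. u (start (Suc i) + k) = W k"
      using occ[OF c] by blast
    then show "\<exists>i. u i = x \<and> (\<forall>k<n. u (Suc i + k) = V k)"
      using V succ_letter_inj[of "u i" x] u_less x by metis
  qed
  obtain x y where "x < m" "succ_letter x = a" "y < m" "succ_letter y = b"
    using succ_letter_surj infinite_left_ext_less assms(2,3) by metis
  then show ?thesis
    using that[of x y V] branch[of a x] branch[of b y] V occ_a \<open>a \<noteq> b\<close> by blast
qed

lemma left_special_branch_head:
  assumes "a \<noteq> b" "infinite_left_ext u a W" "infinite_left_ext u b W"
  shows "W 0 = u 0"
proof -
  have "\<exists>i. u i = a \<and> (\<forall>k<1. u (Suc i + k) = W k)" "\<exists>i. u i = b \<and> (\<forall>k<1. u (Suc i + k) = W k)"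
    using assms(2,3) unfolding infinite_left_ext_iff by blast+
  then obtain p p' where "u p = a" "u (Suc p) = W 0" "u p' = b" "u (Suc p') = W 0"
    by auto
  then show ?thesis
    using left_special_letter_eq_0[of p "W 0" p'] \<open>a \<noteq> b\<close> u_0 by simp
qed

lemma left_special_branch_image:
  assumes ab: "a \<noteq> b" "infinite_left_ext u a W" "infinite_left_ext u b W"
    and prefix: "\<And>x y V k. x \<noteq> y \<Longrightarrow> infinite_left_ext u x V \<Longrightarrow> infinite_left_ext u y V \<Longrightarrow>
      k < n \<Longrightarrow> V k = u k"
    and "k < start n"
  shows "W k = u k"
proof -
  obtain x y V where V: "x \<noteq> y" "infinite_left_ext u x V" "infinite_left_ext u y V"
    and occ: "\<And>n. \<exists>i. (\<forall>k<sync_window n. u (start (Suc i) + k) = W k) \<and> (\<forall>k<n. u (Suc i + k) = V k)"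
    by (rule desubstitute_branch[OF ab]) (rule that)
  obtain i where W: "\<forall>k<sync_window n. u (start (Suc i) + k) = W k"
    and "\<forall>k<n. u (Suc i + k) = V k"
    using occ by blast
  then have agree: "\<forall>k<n. u (Suc i + k) = u (0 + k)"
    using prefix[OF V] by simp
  then have "\<forall>p<start n. u (start (Suc i) + p) = u p"
    using agree_imp_image_agree[OF agree] agree_imp_start_diff_eq[OF agree] by simp
  moreover have "n * phi_len_bound \<le> sync_window n"
    unfolding sync_window_def by (intro mult_le_mono1) simp
  then have "start n \<le> sync_window n"
    using start_add_le[of 0 n] by simp
  ultimately show ?thesis
    using W \<open>k < start n\<close> by auto
qed

theorem left_special_branch_eq_u:
  assumes "a \<noteq> b" "infinite_left_ext u a W" "infinite_left_ext u b W"
  shows "W k = u k"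
proof -
  have branch: "W k = u k"
    if "a \<noteq> b" "infinite_left_ext u a W" "infinite_left_ext u b W" "k < Suc n" for a b W k n
    using that
  proof (induction n arbitrary: a b W k)
    case 0
    then show ?case
      using left_special_branch_head by simp
  next
    case (Suc n)
    have "Suc (Suc n) \<le> start (Suc n)"
      using start_gt[of "Suc n"] by simp
    then have "k < start (Suc n)"
      using Suc.prems(4) by simp
    then show ?case
      using left_special_branch_image[of a b W "Suc n" k] Suc.prems(1-3) Suc.IH by blast
  qed
  show ?thesis
    using assms by (rule branch[where n = k]) simp
qed

lemma left_full_word: "left_full_word u m"
  by unfold_locales (simp_all add: u_less two_le_length left_ext_prefix)

end

lemma parry_substitution_if_simple_parry_digits:
  assumes "simple_parry_digits t"
  shows "parry_substitution t"
proof
  have "t \<noteq> []" "2 \<le> length t"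
    using assms by (auto simp: simple_parry_digits_def)
  then show "1 \<le> t ! (length t - 1)"
    using assms by (simp add: simple_parry_digits_def last_conv_nth)
qed (use assms in \<open>auto simp: simple_parry_digits_def\<close>)

theorem corollary5:
  fixes t :: "nat list"
  assumes "simple_parry_digits t"
  shows "affine_complexity (u_beta t) \<longleftrightarrow>
         \<not> (\<exists>w. maximal_left_special (length t) (u_beta t) w)"
proof -
  interpret parry_substitution t
    using assms by (rule parry_substitution_if_simple_parry_digits)
  show ?thesis
    using left_full_word.affine_complexity_iff_no_maximal_left_special[OF left_full_word]
      left_special_branch_eq_u by blast
qed

end
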